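(* If $f\in{\rm elh}(\mathbb{C})$ is a polynomial, then the map $L_f:{\rm elh}(\mathbb{C})\to{\rm elh}(\mathbb{C})$, $L_f(g)=f\circ g$, is injective.
   Context: ${\rm elh}(\mathbb{C})$ denotes the set of entire functions with nowhere vanishing derivative and derivative $1$ at $0$. *)

theory Defs
  imports "HOL-Complex_Analysis.Complex_Analysis" "HOL-Computational_Algebra.Polynomial"
begin

definition elh :: "(complex \<Rightarrow> complex) set" where
  "elh = {f. f holomorphic_on UNIV \<and> (\<forall>z. deriv f z \<noteq> 0) \<and> deriv f 0 = 1}"

end

theory Submission
  imports Defs "HOL-Computational_Algebra.Fundamental_Theorem_Algebra"
begin

text \<open>By the fundamental theorem of algebra, the derivative of a polynomial in elh, having no
  zeros, is constant, hence equal to its value 1 at 0; so the polynomial is a translation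
  \<open>z \<mapsto> z + c\<close>. Composing with a translation preserves elh and is clearly injective.\<close>

lemma root_free_poly_constant:
  fixes p :: "complex poly"
  assumes "\<And>z. poly p z \<noteq> 0"
  shows "poly p = (\<lambda>_. poly p 0)"
proof -
  have "constant (poly p)"
    using fundamental_theorem_of_algebra assms by blast
  then show ?thesis
    unfolding constant_def by blast
qed

lemma constant_derivative_imp_affine:
  fixes f :: "'a :: real_normed_field \<Rightarrow> 'a"
  assumes "\<And>z. (f has_field_derivative a) (at z)"
  shows "f = (\<lambda>z. a * z + f 0)"
proof -
  have "((\<lambda>z. f z - a * z) has_field_derivative 0) (at z within UNIV)" for z
    using assms[of z] by (auto intro!: derivative_eq_intros)
  then obtain k where "\<forall>z\<in>UNIV. f z - a * z = k"
    using has_field_derivative_zero_constant[OF convex_UNIV] by blast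
  then show ?thesis
    by (metis UNIV_I diff_eq_eq mult_zero_right diff_zero add.commute)
qed

lemma elh_poly_eq_translation:
  assumes "f \<in> elh" and "f = poly p"
  shows "f = (\<lambda>z. z + f 0)"
proof -
  have deriv_f: "deriv f z = poly (pderiv p) z" for z
    using assms(2) DERIV_imp_deriv[OF poly_DERIV] by simp
  have "poly (pderiv p) = (\<lambda>_. 1)"
    using root_free_poly_constant[of "pderiv p"] assms(1)
    by (auto simp: elh_def deriv_f)
  then have "(f has_field_derivative 1) (at z)" for z
    using poly_DERIV[of p z] assms(2) by simp
  then show ?thesis
    using constant_derivative_imp_affine[of f 1] by simp
qed

lemma elh_add_const:
  assumes "g \<in> elh"
  shows "(\<lambda>z. g z + c) \<in> elh"
proof -
  have holo: "g holomorphic_on UNIV"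
    using assms by (simp add: elh_def)
  then have "deriv (\<lambda>z. g z + c) z = deriv g z" for z
    by (simp add: holomorphic_on_imp_differentiable_at)
  moreover have "(\<lambda>z. g z + c) holomorphic_on UNIV"
    using holo by (intro holomorphic_intros)
  ultimately show ?thesis
    using assms by (simp add: elh_def)
qed

theorem proposition3p21:
  fixes f :: "complex \<Rightarrow> complex"
  assumes "f \<in> elh"
    and "\<exists>p :: complex poly. f = poly p"
  shows "(\<lambda>g. f \<circ> g) ` elh \<subseteq> elh \<and> inj_on (\<lambda>g. f \<circ> g) elh"
proof -
  have comp: "f \<circ> g = (\<lambda>z. g z + f 0)" for g
    using assms elh_poly_eq_translation by (metis comp_apply)
  have "(\<lambda>g. f \<circ> g) ` elh \<subseteq> elh"
    using elh_add_const by (auto simp: comp)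
  moreover have "inj_on (\<lambda>g. f \<circ> g) elh"
    by (rule inj_onI) (simp add: comp fun_eq_iff)
  ultimately show ?thesis ..
qed

end
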